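(* Let $V,W$ be finite-dimensional real vector spaces, let $\rho\colon\mathrm{GL}(V)\to\mathrm{GL}(W)$ be a representation, and let $\mathcal{R}=(\mathcal{R}^0,\mathcal{R}^1,\dots)$ be a sequence in $\mathscr{P}(V;W)$ whose minimal polynomial $P_{\min}(\mathcal{R})$ has degree $k$. If $\mathrm{Kern}(\mathrm{Eval}_{\mathcal{R}})$ is an ideal of $\mathscr{P}(V)[\lambda]$, then $G(\mathcal{R}^{\le k})=G(\mathcal{R}^{\le k+1})$.
   Context: $\mathscr{P}(V)$ and $\mathscr{P}(V;W)$ denote the real-valued and $W$-valued polynomial functions on $V$. The degree $k$ of $P_{\min}(\mathcal{R})$ is the smallest integer $k\ge0$ such that $\mathcal{R}^0(X),\dots,\mathcal{R}^k(X)$ are linearly dependent for every $X\in V$. Then $P_{\min}(\mathcal{R})=\lambda^k+\sum_{i=1}^k a_i\lambda^{k-i}$, where $a_i$ are the unique rational functions with $\mathcal{R}^k=-\sum_{i=1}^k a_i\mathcal{R}^{k-i}$. $\mathrm{Eval}_{\mathcal{R}}\colon\mathscr{P}(V)[\lambda]\to\mathscr{P}(V;W)$ is the unique $\mathscr{P}(V)$-module homomorphism with $\lambda^i\mapsto\mathcal{R}^i$. $\mathrm{GL}(V)$ acts on $W$-valued functions by $(F\cdot\mathcal{R}^i)(X)=\rho(F)(\mathcal{R}^i(F^{-1}X))$. For $m\ge0$, $G(\mathcal{R}^{\le m})=\{F\in\mathrm{GL}(V): F\cdot\mathcal{R}^i=\mathcal{R}^i\text{ for }i=0,\dots,m\}$.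 *)

theory Defs
  imports "HOL-Analysis.Analysis" "HOL-Computational_Algebra.Polynomial" "HOL-Library.Function_Algebras"
begin

inductive_set polyfun :: "('v::euclidean_space \<Rightarrow> real) set" where
  const: "(\<lambda>x. c) \<in> polyfun"
| lin: "linear f \<Longrightarrow> f \<in> polyfun"
| add: "f \<in> polyfun \<Longrightarrow> g \<in> polyfun \<Longrightarrow> (\<lambda>x. f x + g x) \<in> polyfun"
| mult: "f \<in> polyfun \<Longrightarrow> g \<in> polyfun \<Longrightarrow> (\<lambda>x. f x * g x) \<in> polyfun"

definition vpolyfun :: "('v::euclidean_space \<Rightarrow> 'w::euclidean_space) set" where
  "vpolyfun = {F. \<forall>b\<in>Basis. (\<lambda>x. F x \<bullet> b) \<in> polyfun}"

text \<open>The ring P(V)[lambda]: polynomials in lambda with coefficients in P(V).\<close>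
definition polyring :: "('v::euclidean_space \<Rightarrow> real) poly set" where
  "polyring = {p. \<forall>i. coeff p i \<in> polyfun}"

definition Eval :: "(nat \<Rightarrow> 'v::euclidean_space \<Rightarrow> 'w::euclidean_space) \<Rightarrow> ('v \<Rightarrow> real) poly \<Rightarrow> 'v \<Rightarrow> 'w" where
  "Eval R p = (\<lambda>X. \<Sum>i\<le>degree p. coeff p i X *\<^sub>R R i X)"

definition Kern :: "(nat \<Rightarrow> 'v::euclidean_space \<Rightarrow> 'w::euclidean_space) \<Rightarrow> ('v \<Rightarrow> real) poly set" where
  "Kern R = {p \<in> polyring. Eval R p = (\<lambda>X. 0)}"

definition is_ideal_of_polyring :: "('v::euclidean_space \<Rightarrow> real) poly set \<Rightarrow> bool" where
  "is_ideal_of_polyring I \<longleftrightarrow> I \<subseteq> polyring \<and> 0 \<in> I \<and>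
     (\<forall>p\<in>I. \<forall>q\<in>I. p + q \<in> I) \<and> (\<forall>a\<in>polyring. \<forall>p\<in>I. a * p \<in> I)"

definition dep_upto :: "(nat \<Rightarrow> 'v::euclidean_space \<Rightarrow> 'w::euclidean_space) \<Rightarrow> nat \<Rightarrow> bool" where
  "dep_upto R k \<longleftrightarrow> (\<forall>X. \<exists>c::nat \<Rightarrow> real. (\<exists>i\<le>k. c i \<noteq> 0) \<and> (\<Sum>i\<le>k. c i *\<^sub>R R i X) = 0)"

text \<open>deg P_min(R) = k: k is the least such integer.\<close>
definition minpoly_degree :: "(nat \<Rightarrow> 'v::euclidean_space \<Rightarrow> 'w::euclidean_space) \<Rightarrow> nat \<Rightarrow> bool" where
  "minpoly_degree R k \<longleftrightarrow> dep_upto R k \<and> (\<forall>j<k. \<not> dep_upto R j)"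

definition GL :: "('a::real_vector \<Rightarrow> 'a) set" where
  "GL = {F. linear F \<and> bij F}"

definition is_rep :: "(('v::euclidean_space \<Rightarrow> 'v) \<Rightarrow> ('w::euclidean_space \<Rightarrow> 'w)) \<Rightarrow> bool" where
  "is_rep \<rho> \<longleftrightarrow> (\<forall>F\<in>GL. \<rho> F \<in> GL) \<and> (\<forall>F\<in>GL. \<forall>G\<in>GL. \<rho> (F \<circ> G) = \<rho> F \<circ> \<rho> G)"

text \<open>Stabilizer G(R^{<=m}) of R^0..R^m under (F.R^i)(X) = rho(F)(R^i(F^{-1} X)).\<close>
definition stab :: "(('v::euclidean_space \<Rightarrow> 'v) \<Rightarrow> ('w::euclidean_space \<Rightarrow> 'w)) \<Rightarrow> (nat \<Rightarrow> 'v \<Rightarrow> 'w) \<Rightarrow> nat \<Rightarrow> ('v \<Rightarrow> 'v) set" where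
  "stab \<rho> R m = {F \<in> GL. \<forall>i\<le>m. (\<lambda>X. \<rho> F (R i (inv F X))) = R i}"

end

theory Submission
  imports Defs "Jordan_Normal_Form.Determinant"
begin

no_notation Matrix.scalar_prod (infix "\<bullet>" 70)
no_notation Matrix.vec_index (infixl "$" 100)

text \<open>
  Pick X0 at which R^0(X0), ..., R^(k-1)(X0) are independent. Since R^0, ..., R^k are dependent
  everywhere, Cramer's rule for the Gram matrix produces polynomial functions q_0, ..., q_k with
  \<Sum> q_j R^j = 0 and q_k(X0) \<noteq> 0. Multiplying by \<lambda> inside the ideal Kern(Eval_R) gives
  \<Sum> q_j R^(j+1) = 0, and the same holds for the relation transported by F \<in> G(R^{\<le>k}),
  whose coefficients are q_j \<circ> F^{-1}. Comparing the two shifted relations, the terms with j < k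
  cancel, leaving (q_k \<circ> F^{-1}) \<cdot> (F\<cdot>R^(k+1) - R^(k+1)) = 0. Polynomial functions have no zero
  divisors, so F\<cdot>R^(k+1) = R^(k+1).
\<close>

section \<open>Polynomial functions\<close>

lemma polyfun_sum: "(\<And>i. i \<in> S \<Longrightarrow> f i \<in> polyfun) \<Longrightarrow> (\<lambda>x. \<Sum>i\<in>S. f i x) \<in> polyfun"
  by (induction S rule: infinite_finite_induct) (auto intro: polyfun.const polyfun.add)

lemma polyfun_prod: "(\<And>i. i \<in> S \<Longrightarrow> f i \<in> polyfun) \<Longrightarrow> (\<lambda>x. \<Prod>i\<in>S. f i x) \<in> polyfun"
  by (induction S rule: infinite_finite_induct) (auto intro: polyfun.const polyfun.mult)

lemma polyfun_cmult: "f \<in> polyfun \<Longrightarrow> (\<lambda>x. c * f x) \<in> polyfun"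
  using polyfun.mult[OF polyfun.const] by blast

lemma polyfun_diff: "f \<in> polyfun \<Longrightarrow> g \<in> polyfun \<Longrightarrow> (\<lambda>x. f x - g x) \<in> polyfun"
  using polyfun.add[OF _ polyfun_cmult[of g "-1"]] by simp

lemma polyfun_comp_linear: "f \<in> polyfun \<Longrightarrow> linear G \<Longrightarrow> (\<lambda>x. f (G x)) \<in> polyfun"
proof (induction f rule: polyfun.induct)
  case (lin f)
  then show ?case using linear_compose[of G f] polyfun.lin by (simp add: o_def)
qed (auto intro: polyfun.intros)

lemma polyfun_along_line: "f \<in> polyfun \<Longrightarrow> \<exists>P. \<forall>t. f (a + t *\<^sub>R v) = poly P t"
proof (induction f rule: polyfun.induct)
  case (const c)
  show ?case by (intro exI[of _ "[:c:]"]) simp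
next
  case (lin f)
  then show ?case by (intro exI[of _ "[:f a, f v:]"]) (simp add: linear_add linear_scale)
next
  case (add f g)
  then obtain P Q where "\<forall>t. f (a + t *\<^sub>R v) = poly P t" "\<forall>t. g (a + t *\<^sub>R v) = poly Q t"
    by blast
  then show ?case by (intro exI[of _ "P + Q"]) simp
next
  case (mult f g)
  then obtain P Q where "\<forall>t. f (a + t *\<^sub>R v) = poly P t" "\<forall>t. g (a + t *\<^sub>R v) = poly Q t"
    by blast
  then show ?case by (intro exI[of _ "P * Q"]) simp
qed

text \<open>Restricted to the line through y and x, both factors become univariate polynomials.\<close>

lemma polyfun_no_zero_divisors:
  assumes f: "f \<in> polyfun" and g: "g \<in> polyfun"
    and fg: "\<And>x. f x * g x = 0" and "f y \<noteq> 0"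
  shows "g x = 0"
proof -
  obtain P where P: "\<forall>t. f (y + t *\<^sub>R (x - y)) = poly P t"
    using polyfun_along_line[OF f] by blast
  obtain Q where Q: "\<forall>t. g (y + t *\<^sub>R (x - y)) = poly Q t"
    using polyfun_along_line[OF g] by blast
  have "\<forall>t. poly (P * Q) t = 0"
    using P Q fg by (metis poly_mult)
  then have "P * Q = 0"
    using poly_all_0_iff_0 by blast
  moreover have "P \<noteq> 0"
    using P[rule_format, of 0] \<open>f y \<noteq> 0\<close> by auto
  ultimately have "Q = 0" by simp
  then show ?thesis using Q[rule_format, of 1] by simp
qed

lemma polyfun_inner_const: "F \<in> vpolyfun \<Longrightarrow> (\<lambda>x. F x \<bullet> y) \<in> polyfun"
proof -
  assume "F \<in> vpolyfun"
  then have "(\<lambda>x. \<Sum>b\<in>Basis. (y \<bullet> b) * (F x \<bullet> b)) \<in> polyfun"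
    by (intro polyfun_sum polyfun_cmult) (auto simp: vpolyfun_def)
  then show ?thesis by (subst euclidean_inner) (simp add: mult.commute)
qed

lemma vpolyfun_iff_inner: "F \<in> vpolyfun \<longleftrightarrow> (\<forall>y. (\<lambda>x. F x \<bullet> y) \<in> polyfun)"
  using polyfun_inner_const unfolding vpolyfun_def by blast

lemma polyfun_inner: "F \<in> vpolyfun \<Longrightarrow> G \<in> vpolyfun \<Longrightarrow> (\<lambda>x. F x \<bullet> G x) \<in> polyfun"
  unfolding vpolyfun_def by (subst euclidean_inner) (rule polyfun_sum, rule polyfun.mult, auto)

lemma vpolyfun_diff: "F \<in> vpolyfun \<Longrightarrow> G \<in> vpolyfun \<Longrightarrow> (\<lambda>x. F x - G x) \<in> vpolyfun"
  unfolding vpolyfun_def by (auto simp: inner_diff_left intro: polyfun_diff)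

lemma vpolyfun_comp_linear: "F \<in> vpolyfun \<Longrightarrow> linear G \<Longrightarrow> (\<lambda>x. F (G x)) \<in> vpolyfun"
  unfolding vpolyfun_def by (auto intro: polyfun_comp_linear)

lemma vpolyfun_linear_comp:
  fixes H :: "'w::euclidean_space \<Rightarrow> 'u::euclidean_space"
  assumes "F \<in> vpolyfun" "linear H"
  shows "(\<lambda>x. H (F x)) \<in> vpolyfun"
  unfolding vpolyfun_iff_inner
  using polyfun_inner_const[OF assms(1)] by (simp add: adjoint_works[OF assms(2), symmetric])

lemma vpolyfun_no_zero_divisors:
  fixes F :: "'v::euclidean_space \<Rightarrow> 'w::euclidean_space"
  assumes "f \<in> polyfun" "F \<in> vpolyfun" "\<And>x. f x *\<^sub>R F x = 0" "f y \<noteq> 0"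
  shows "F x = 0"
proof (rule euclidean_eqI)
  fix b :: 'w assume "b \<in> Basis"
  have "f x' * (F x' \<bullet> b) = 0" for x'
    using arg_cong[OF assms(3)[of x'], of "\<lambda>v. v \<bullet> b"] by simp
  then show "F x \<bullet> b = 0 \<bullet> b"
    using polyfun_no_zero_divisors[OF assms(1) polyfun_inner_const[OF assms(2)]] assms(4) by simp
qed

lemma polyfun_det:
  assumes "\<And>x. M x \<in> carrier_mat n n"
    and "\<And>i j. i < n \<Longrightarrow> j < n \<Longrightarrow> (\<lambda>x. M x $$ (i,j)) \<in> polyfun"
  shows "(\<lambda>x. Determinant.det (M x)) \<in> polyfun"
proof -
  have "(\<lambda>x. \<Sum>p\<in>{p. p permutes {0..<n}}. signof p * (\<Prod>i = 0..<n. M x $$ (i, p i))) \<in> polyfun"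
    by (rule polyfun_sum, rule polyfun_cmult, rule polyfun_prod) (use assms(2) in \<open>auto simp: permutes_in_image\<close>)
  then show ?thesis using det_def'[OF assms(1)] by simp
qed

section \<open>Matrices of inner products\<close>

definition inner_mat :: "nat \<Rightarrow> (nat \<Rightarrow> 'a::real_inner) \<Rightarrow> (nat \<Rightarrow> 'a) \<Rightarrow> real mat" where
  "inner_mat n u w = mat n n (\<lambda>(i,j). u i \<bullet> w j)"

lemma inner_mat_carrier [simp]: "inner_mat n u w \<in> carrier_mat n n"
  by (simp add: inner_mat_def)

lemma inner_mat_mult_vec:
  assumes "i < n" "v \<in> carrier_vec n"
  shows "Matrix.vec_index (inner_mat n u w *\<^sub>v v) i = u i \<bullet> (\<Sum>j<n. Matrix.vec_index v j *\<^sub>R w j)"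
  using assms
  by (simp add: inner_mat_def mult_mat_vec_def scalar_prod_def atLeast0LessThan inner_sum_right mult.commute)

lemma det_inner_mat_eq_0:
  assumes "\<exists>i<n. c i \<noteq> 0" and "(\<Sum>i<n. c i *\<^sub>R w i) = 0"
  shows "Determinant.det (inner_mat n u w) = 0"
proof -
  have "vec n c \<noteq> 0\<^sub>v n"
    using assms(1) by (metis index_vec index_zero_vec(1))
  moreover have "inner_mat n u w *\<^sub>v vec n c = 0\<^sub>v n"
  proof (rule eq_vecI)
    fix i assume "i < dim_vec (0\<^sub>v n :: real vec)"
    moreover have "(\<Sum>j<n. Matrix.vec_index (vec n c) j *\<^sub>R w j) = (\<Sum>j<n. c j *\<^sub>R w j)"
      by (intro sum.cong) auto
    ultimately show "Matrix.vec_index (inner_mat n u w *\<^sub>v vec n c) i = Matrix.vec_index (0\<^sub>v n) i"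
      using assms(2) by (simp add: inner_mat_mult_vec)
  qed (simp add: inner_mat_def)
  ultimately show ?thesis
    using det_0_iff_vec_prod_zero[OF inner_mat_carrier] by (meson vec_carrier)
qed

lemma det_gram_mat_neq_0:
  assumes indep: "\<forall>c. (\<Sum>i<n. c i *\<^sub>R w i) = 0 \<longrightarrow> (\<forall>i<n. c i = 0)"
  shows "Determinant.det (inner_mat n w w) \<noteq> 0"
proof
  assume "Determinant.det (inner_mat n w w) = 0"
  then obtain v where v: "v \<in> carrier_vec n" "v \<noteq> 0\<^sub>v n" "inner_mat n w w *\<^sub>v v = 0\<^sub>v n"
    using det_0_iff_vec_prod_zero[OF inner_mat_carrier] by blast
  define s where "s = (\<Sum>j<n. Matrix.vec_index v j *\<^sub>R w j)"
  have "w i \<bullet> s = 0" if "i < n" for i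
    using inner_mat_mult_vec[OF that v(1), of w w] v(3) that by (simp add: s_def)
  then have "s \<bullet> s = 0"
    by (subst (1) s_def) (simp add: inner_sum_left)
  then have "\<forall>i<n. Matrix.vec_index v i = 0"
    using indep by (simp add: s_def)
  then have "v = 0\<^sub>v n"
    using v(1) by (intro eq_vecI) auto
  with v(2) show False ..
qed

lemma cofactor_inner_mat_last_row:
  assumes "\<forall>i<k. u' i = u i"
  shows "cofactor (inner_mat (Suc k) u' w) k j = cofactor (inner_mat (Suc k) u w) k j"
proof -
  have "mat_delete (inner_mat (Suc k) u' w) k j = mat_delete (inner_mat (Suc k) u w) k j"
    unfolding mat_delete_def inner_mat_def using assms by (intro eq_matI) auto
  then show ?thesis by (simp add: cofactor_def)
qed

lemma cofactor_inner_mat_last: "cofactor (inner_mat (Suc k) u w) k k = Determinant.det (inner_mat k u w)"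
proof -
  have "mat_delete (inner_mat (Suc k) u w) k k = inner_mat k u w"
    unfolding mat_delete_def inner_mat_def by (intro eq_matI) auto
  then show ?thesis by (simp add: cofactor_def)
qed

lemma det_inner_mat_expand_last_row:
  "Determinant.det (inner_mat (Suc k) (u(k := b)) w) =
     b \<bullet> (\<Sum>j\<le>k. cofactor (inner_mat (Suc k) u w) k j *\<^sub>R w j)"
proof -
  let ?A = "inner_mat (Suc k) (u(k := b)) w"
  have "Determinant.det ?A = (\<Sum>j<Suc k. ?A $$ (k,j) * cofactor ?A k j)"
    by (rule laplace_expansion_row) auto
  also have "\<dots> = (\<Sum>j<Suc k. (b \<bullet> w j) * cofactor (inner_mat (Suc k) u w) k j)"
  proof (intro sum.cong refl)
    fix j assume "j \<in> {..<Suc k}"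
    moreover have "cofactor ?A k j = cofactor (inner_mat (Suc k) u w) k j"
      by (rule cofactor_inner_mat_last_row) simp
    ultimately show "?A $$ (k,j) * cofactor ?A k j = (b \<bullet> w j) * cofactor (inner_mat (Suc k) u w) k j"
      by (simp add: inner_mat_def)
  qed
  also have "\<dots> = b \<bullet> (\<Sum>j\<le>k. cofactor (inner_mat (Suc k) u w) k j *\<^sub>R w j)"
    by (simp add: inner_sum_right lessThan_Suc_atMost mult.commute)
  finally show ?thesis .
qed

lemma cofactor_relation:
  assumes "\<exists>i\<le>k. c i \<noteq> 0" and "(\<Sum>i\<le>k. c i *\<^sub>R w i) = 0"
  shows "(\<Sum>j\<le>k. cofactor (inner_mat (Suc k) u w) k j *\<^sub>R w j) = 0"
proof -
  define s where "s = (\<Sum>j\<le>k. cofactor (inner_mat (Suc k) u w) k j *\<^sub>R w j)"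
  have "s \<bullet> s = Determinant.det (inner_mat (Suc k) (u(k := s)) w)"
    by (simp add: det_inner_mat_expand_last_row s_def)
  also have "\<dots> = 0"
    using assms by (intro det_inner_mat_eq_0[of _ c]) (auto simp: lessThan_Suc_atMost less_Suc_eq_le)
  finally show ?thesis by (simp add: s_def)
qed

section \<open>A polynomial relation with nonvanishing leading coefficient\<close>

lemma independent_point_of_minpoly_degree:
  assumes "minpoly_degree R k"
  obtains X0 where "\<forall>c. (\<Sum>i<k. c i *\<^sub>R R i X0) = 0 \<longrightarrow> (\<forall>i<k. c i = 0)"
proof (cases k)
  case 0
  then show ?thesis using that by simp
next
  case (Suc m)
  then have "\<not> dep_upto R m"
    using assms unfolding minpoly_degree_def by simp
  then obtain X where "\<forall>c. (\<exists>i\<le>m. c i \<noteq> 0) \<longrightarrow> (\<Sum>i\<le>m. c i *\<^sub>R R i X) \<noteq> 0"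
    unfolding dep_upto_def by blast
  then have "\<forall>c. (\<Sum>i<k. c i *\<^sub>R R i X) = 0 \<longrightarrow> (\<forall>i<k. c i = 0)"
    using Suc by (auto simp: lessThan_Suc_atMost less_Suc_eq_le)
  then show ?thesis
    using that by blast
qed

lemma polyfun_relation_exists:
  fixes R :: "nat \<Rightarrow> 'v::euclidean_space \<Rightarrow> 'w::euclidean_space"
  assumes R: "\<forall>i. R i \<in> vpolyfun" and dep: "dep_upto R k"
    and indep: "\<forall>c. (\<Sum>i<k. c i *\<^sub>R R i X0) = 0 \<longrightarrow> (\<forall>i<k. c i = 0)"
  obtains q where "\<forall>j. q j \<in> polyfun" "\<forall>X. (\<Sum>j\<le>k. q j X *\<^sub>R R j X) = 0" "q k X0 \<noteq> 0"
proof -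
  define M where "M X = inner_mat (Suc k) (\<lambda>i. R i X) (\<lambda>i. R i X)" for X
  define q where "q j X = cofactor (M X) k j" for j X
  have "q j \<in> polyfun" for j
  proof -
    have "(\<lambda>X. Determinant.det (mat_delete (M X) k j)) \<in> polyfun"
    proof (rule polyfun_det)
      show "mat_delete (M X) k j \<in> carrier_mat k k" for X
        using mat_delete_carrier[OF inner_mat_carrier, of "Suc k"] by (simp add: M_def)
      fix i' j' assume "i' < k" "j' < k"
      then show "(\<lambda>X. mat_delete (M X) k j $$ (i', j')) \<in> polyfun"
        using R by (simp add: M_def mat_delete_def inner_mat_def polyfun_inner)
    qed
    then show ?thesis
      unfolding q_def cofactor_def by (rule polyfun_cmult)
  qed
  moreover have "(\<Sum>j\<le>k. q j X *\<^sub>R R j X) = 0" for X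
  proof -
    obtain c where "\<exists>i\<le>k. c i \<noteq> 0" "(\<Sum>i\<le>k. c i *\<^sub>R R i X) = 0"
      using dep unfolding dep_upto_def by blast
    then show ?thesis
      unfolding q_def M_def by (rule cofactor_relation)
  qed
  moreover have "q k X0 \<noteq> 0"
    using det_gram_mat_neq_0[OF indep] by (simp add: q_def M_def cofactor_inner_mat_last)
  ultimately show ?thesis
    using that by blast
qed

section \<open>Multiplication by \<open>\<lambda>\<close> in the kernel of evaluation\<close>

definition poly_of_coeffs :: "(nat \<Rightarrow> 'a::comm_monoid_add) \<Rightarrow> nat \<Rightarrow> 'a poly" where
  "poly_of_coeffs c n = (\<Sum>j\<le>n. monom (c j) j)"

lemma coeff_poly_of_coeffs: "coeff (poly_of_coeffs c n) i = (if i \<le> n then c i else 0)"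
  by (simp add: poly_of_coeffs_def coeff_sum coeff_monom)

lemma degree_poly_of_coeffs: "degree (poly_of_coeffs c n) \<le> n"
  by (rule degree_le) (simp add: coeff_poly_of_coeffs)

lemma poly_of_coeffs_in_polyring: "(\<And>j. c j \<in> polyfun) \<Longrightarrow> poly_of_coeffs c n \<in> polyring"
  unfolding polyring_def by (auto simp: coeff_poly_of_coeffs zero_fun_def polyfun.const)

lemma Eval_eq_sum_atMost: "degree p \<le> n \<Longrightarrow> Eval R p X = (\<Sum>i\<le>n. coeff p i X *\<^sub>R R i X)"
  unfolding Eval_def by (rule sum.mono_neutral_left) (auto simp: coeff_eq_0)

lemma Eval_poly_of_coeffs: "Eval R (poly_of_coeffs c n) X = (\<Sum>i\<le>n. c i X *\<^sub>R R i X)"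
  by (simp add: Eval_eq_sum_atMost[OF degree_poly_of_coeffs] coeff_poly_of_coeffs)

lemma Eval_pCons_0: "Eval R (pCons 0 p) = Eval (\<lambda>i. R (Suc i)) p"
proof (cases "p = 0")
  case False
  then show ?thesis
    unfolding Eval_def degree_pCons_eq[OF False] sum.atMost_Suc_shift by simp
qed (simp add: Eval_def)

lemma Kern_pCons_0:
  fixes R :: "nat \<Rightarrow> 'v::euclidean_space \<Rightarrow> 'w::euclidean_space"
  assumes "is_ideal_of_polyring (Kern R)" and "p \<in> Kern R"
  shows "pCons 0 p \<in> Kern R"
proof -
  have "[:0, 1:] \<in> (polyring :: ('v \<Rightarrow> real) poly set)"
    unfolding polyring_def
  proof (intro allI CollectI)
    fix i
    show "coeff ([:0, 1:] :: ('v \<Rightarrow> real) poly) i \<in> polyfun"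
      by (cases i; cases "i - 1") (auto simp: zero_fun_def one_fun_def polyfun.const)
  qed
  moreover have "[:0, 1:] * p = pCons 0 p"
    by simp
  ultimately show ?thesis
    using assms unfolding is_ideal_of_polyring_def by metis
qed

lemma Kern_ideal_shift_relation:
  assumes ideal: "is_ideal_of_polyring (Kern R)" and "\<forall>j. c j \<in> polyfun"
    and "\<forall>X. (\<Sum>j\<le>n. c j X *\<^sub>R R j X) = 0"
  shows "(\<Sum>j\<le>n. c j X *\<^sub>R R (Suc j) X) = 0"
proof -
  have "poly_of_coeffs c n \<in> Kern R"
    using assms(2,3) by (simp add: Kern_def poly_of_coeffs_in_polyring Eval_poly_of_coeffs fun_eq_iff)
  then have "pCons 0 (poly_of_coeffs c n) \<in> Kern R"
    by (rule Kern_pCons_0[OF ideal])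
  then show ?thesis
    by (simp add: Kern_def Eval_pCons_0 Eval_poly_of_coeffs fun_eq_iff)
qed

section \<open>The stabilizer\<close>

lemma GL_inv_linear: "F \<in> GL \<Longrightarrow> linear (Hilbert_Choice.inv (F :: 'v::euclidean_space \<Rightarrow> 'v))"
  unfolding GL_def by (auto intro: bij_is_inj eucl.inj_linear_imp_inv_linear)

lemma is_rep_linear: "is_rep \<rho> \<Longrightarrow> F \<in> GL \<Longrightarrow> linear (\<rho> F)"
  unfolding is_rep_def GL_def by blast

lemma stab_Suc_of_relation:
  fixes \<rho> :: "('v::euclidean_space \<Rightarrow> 'v) \<Rightarrow> ('w::euclidean_space \<Rightarrow> 'w)"
  assumes rep: "is_rep \<rho>" and R: "\<forall>i. R i \<in> vpolyfun" and ideal: "is_ideal_of_polyring (Kern R)"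
    and q: "\<forall>j. q j \<in> polyfun" "\<forall>X. (\<Sum>j\<le>k. q j X *\<^sub>R R j X) = 0" "q k X0 \<noteq> 0"
    and F: "F \<in> stab \<rho> R k"
  shows "F \<in> stab \<rho> R (Suc k)"
proof -
  have "F \<in> GL"
    using F by (simp add: stab_def)
  define G where "G = Hilbert_Choice.inv F"
  define H where "H = \<rho> F"
  have G: "linear G" "G (F X) = X" for X
    using \<open>F \<in> GL\<close> GL_inv_linear by (auto simp: G_def GL_def bij_is_inj)
  have H: "linear H"
    using is_rep_linear[OF rep \<open>F \<in> GL\<close>] by (simp add: H_def)
  have fixed: "H (R i (G X)) = R i X" if "i \<le> k" for i X
    using F that by (auto simp: stab_def H_def G_def fun_eq_iff)
  have qG: "\<forall>j. (\<lambda>X. q j (G X)) \<in> polyfun"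
    using q(1) G(1) polyfun_comp_linear by blast
  have "(\<Sum>j\<le>k. q j (G X) *\<^sub>R R j X) = H (\<Sum>j\<le>k. q j (G X) *\<^sub>R R j (G X))" for X
    by (simp add: fixed linear_sum[OF H] linear_scale[OF H])
  then have transported: "\<forall>X. (\<Sum>j\<le>k. q j (G X) *\<^sub>R R j X) = 0"
    using q(2) linear_0[OF H] by simp
  from Kern_ideal_shift_relation[OF ideal qG transported]
  have shifted_transported: "(\<Sum>j<k. q j (G X) *\<^sub>R R (Suc j) X) + q k (G X) *\<^sub>R R (Suc k) X = 0" for X
    by (simp add: lessThan_Suc_atMost[symmetric])
  have "H (\<Sum>j\<le>k. q j (G X) *\<^sub>R R (Suc j) (G X)) = 0" for X
    using Kern_ideal_shift_relation[OF ideal q(1,2)] linear_0[OF H] by simp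
  then have "(\<Sum>j\<le>k. q j (G X) *\<^sub>R H (R (Suc j) (G X))) = 0" for X
    by (simp add: linear_sum[OF H] linear_scale[OF H])
  then have shifted_image:
    "(\<Sum>j<k. q j (G X) *\<^sub>R R (Suc j) X) + q k (G X) *\<^sub>R H (R (Suc k) (G X)) = 0" for X
    by (simp add: fixed Suc_leI lessThan_Suc_atMost[symmetric])
  from shifted_image shifted_transported have "q k (G X) *\<^sub>R H (R (Suc k) (G X)) = q k (G X) *\<^sub>R R (Suc k) X" for X
    by (metis add_left_imp_eq)
  then have defect: "q k (G X) *\<^sub>R (H (R (Suc k) (G X)) - R (Suc k) X) = 0" for X
    by (simp add: scaleR_diff_right)
  have "(\<lambda>X. H (R (Suc k) (G X)) - R (Suc k) X) \<in> vpolyfun"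
    using vpolyfun_diff[OF vpolyfun_linear_comp[OF vpolyfun_comp_linear[OF R[rule_format] G(1)] H]
        R[rule_format]] .
  moreover have "q k (G (F X0)) \<noteq> 0"
    using q(3) G(2) by simp
  ultimately have "H (R (Suc k) (G X)) - R (Suc k) X = 0" for X
    using vpolyfun_no_zero_divisors[OF qG[rule_format, of k] _ defect] by blast
  then show ?thesis
    using F by (auto simp: stab_def H_def G_def fun_eq_iff le_Suc_eq)
qed

theorem mainTheorem15:
  fixes \<rho> :: "('v::euclidean_space \<Rightarrow> 'v) \<Rightarrow> ('w::euclidean_space \<Rightarrow> 'w)"
    and R :: "nat \<Rightarrow> 'v \<Rightarrow> 'w" and k :: nat
  assumes "is_rep \<rho>"
    and "\<forall>i. R i \<in> vpolyfun"
    and "minpoly_degree R k"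
    and "is_ideal_of_polyring (Kern R)"
  shows "stab \<rho> R k = stab \<rho> R (Suc k)"
proof
  show "stab \<rho> R (Suc k) \<subseteq> stab \<rho> R k"
    unfolding stab_def by auto
next
  obtain X0 where X0: "\<forall>c. (\<Sum>i<k. c i *\<^sub>R R i X0) = 0 \<longrightarrow> (\<forall>i<k. c i = 0)"
    using independent_point_of_minpoly_degree[OF assms(3)] by blast
  have "dep_upto R k"
    using assms(3) by (simp add: minpoly_degree_def)
  then obtain q where "\<forall>j. q j \<in> polyfun" "\<forall>X. (\<Sum>j\<le>k. q j X *\<^sub>R R j X) = 0" "q k X0 \<noteq> 0"
    using polyfun_relation_exists[OF assms(2) _ X0] by blast
  then show "stab \<rho> R k \<subseteq> stab \<rho> R (Suc k)"
    using stab_Suc_of_relation[OF assms(1,2,4)] by blast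
qed

end
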